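(* Let $\mathfrak{H}$ be a Euclidean space and let $(\mathcal{X},\mathsf{S},\gamma,(\Lambda_{a})_{a\in\mathcal{A}})$ be a spectral decomposition system for $\mathfrak{H}$ such that the set $\{\Lambda_a\}_{a\in\mathcal{A}}$ is closed in $\mathscr{L}(\mathcal{X},\mathfrak{H})$. Let $\varphi\colon\mathcal{X}\to[-\infty,+\infty]$ be $\mathsf{S}$-invariant, let $x,y\in\mathcal{X}$, and let $a\in\mathcal{A}$. Then: (i) $y\in\partial_{\mathsf{F}}\varphi(x)$ if and only if $\Lambda_a y\in\partial_{\mathsf{F}}(\varphi\circ\gamma)(\Lambda_a x)$; (ii) if $y\in\partial_{\mathsf{L}}\varphi(x)$, then $\Lambda_a y\in\partial_{\mathsf{L}}(\varphi\circ\gamma)(\Lambda_a x)$.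
   Context: A Euclidean space is a finite-dimensional real Hilbert space; $\mathscr{L}(\mathcal{X},\mathfrak{H})$ carries the operator-norm topology. A spectral decomposition system for a Euclidean space $\mathfrak{H}$ is a tuple $(\mathcal{X},\mathsf{S},\gamma,(\Lambda_a)_{a\in\mathcal{A}})$ where $\mathcal{X}$ is a Euclidean space, $\mathsf{S}$ is a group acting on $\mathcal{X}$ such that each map $x\mapsto \mathsf{s}\cdot x$ is a linear isometry, $\gamma\colon\mathfrak{H}\to\mathcal{X}$ is a mapping, and each $\Lambda_a\colon\mathcal{X}\to\mathfrak{H}$ is a linear isometry, such that: [A] there exists a mapping $\tau\colon\mathcal{X}\to\mathcal{X}$ with $\tau(\mathsf{s}\cdot x)=\tau(x)$ for all $\mathsf{s},x$, $\tau(x)\in\mathsf{S}\cdot x$ for all $x$, and $\gamma\circ\Lambda_a=\tau$ for all $a\in\mathcal{A}$; [B] for every $X\in\mathfrak{H}$ there exists $a\in\mathcal{A}$ with $X=\Lambda_a\gamma(X)$; [C] $\langle X,Y\rangle\le\langle\gamma(X),\gamma(Y)\rangle$ for all $X,Y\in\mathfrak{H}$. A function $\varphi$ on $\mathcal{X}$ is $\mathsf{S}$-invariant if $\varphi(\mathsf{s}\cdot x)=\varphi(x)$ for all $\mathsf{s},x$. For $f\colon\mathcal{H}\to[-\infty,+\infty]$: $\partial_{\mathsf{F}}f(x)=\{y:\liminf_{z\to x,z\ne x}(f(z)-f(x)-\langle z-x,y\rangle)/\|z-x\|\ge0\}$ if $f(x)\in\mathbb{R}$, $\varnothing$ otherwise;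 $\partial_{\mathsf{L}}f(x)$, for $f(x)\in\mathbb{R}$, is the set of $y$ for which there exist $x_n\to x$ with $f(x_n)\to f(x)$ and $y_n\to y$ with $y_n\in\partial_{\mathsf{F}}f(x_n)$, and is $\varnothing$ if $f(x)\in\{\pm\infty\}$. *)

theory Defs
  imports "HOL-Analysis.Analysis" "HOL-Algebra.Group"
begin

definition lin_isometry :: "('a::real_normed_vector \<Rightarrow> 'b::real_normed_vector) \<Rightarrow> bool" where
  "lin_isometry L \<longleftrightarrow> linear L \<and> (\<forall>x. norm (L x) = norm x)"

definition isometric_group_action ::
  "'g monoid \<Rightarrow> ('g \<Rightarrow> 'x::real_normed_vector \<Rightarrow> 'x) \<Rightarrow> bool" where
  "isometric_group_action G act \<longleftrightarrow>
     group G \<and>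
     (\<forall>x. act \<one>\<^bsub>G\<^esub> x = x) \<and>
     (\<forall>g\<in>carrier G. \<forall>h\<in>carrier G. \<forall>x. act (g \<otimes>\<^bsub>G\<^esub> h) x = act g (act h x)) \<and>
     (\<forall>g\<in>carrier G. lin_isometry (act g))"

definition orbit_of :: "'g monoid \<Rightarrow> ('g \<Rightarrow> 'x \<Rightarrow> 'x) \<Rightarrow> 'x \<Rightarrow> 'x set" where
  "orbit_of G act x = {act g x | g. g \<in> carrier G}"

definition S_invariant :: "'g monoid \<Rightarrow> ('g \<Rightarrow> 'x \<Rightarrow> 'x) \<Rightarrow> ('x \<Rightarrow> 'c) \<Rightarrow> bool" where
  "S_invariant G act f \<longleftrightarrow> (\<forall>g\<in>carrier G. \<forall>x. f (act g x) = f x)"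

definition spectral_decomposition_system ::
  "'g monoid \<Rightarrow> ('g \<Rightarrow> 'x::euclidean_space \<Rightarrow> 'x) \<Rightarrow> ('h::euclidean_space \<Rightarrow> 'x)
     \<Rightarrow> 'a set \<Rightarrow> ('a \<Rightarrow> 'x \<Rightarrow> 'h) \<Rightarrow> bool" where
  "spectral_decomposition_system G act \<gamma> A \<Lambda> \<longleftrightarrow>
     isometric_group_action G act \<and>
     (\<forall>a\<in>A. lin_isometry (\<Lambda> a)) \<and>
     (\<exists>\<tau>. S_invariant G act \<tau> \<and> (\<forall>x. \<tau> x \<in> orbit_of G act x) \<and>
          (\<forall>a\<in>A. \<gamma> \<circ> \<Lambda> a = \<tau>)) \<and>
     (\<forall>X. \<exists>a\<in>A. X = \<Lambda> a (\<gamma> X)) \<and>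
     (\<forall>X Y. inner X Y \<le> inner (\<gamma> X) (\<gamma> Y))"

definition frechet_subdiff :: "('a::real_inner \<Rightarrow> ereal) \<Rightarrow> 'a \<Rightarrow> 'a set" where
  "frechet_subdiff f x =
     (if f x \<in> {\<infinity>, -\<infinity>} then {}
      else {y. Liminf (at x)
                 (\<lambda>z. (f z - f x - ereal (inner (z - x) y)) / ereal (norm (z - x))) \<ge> 0})"

definition limiting_subdiff :: "('a::real_inner \<Rightarrow> ereal) \<Rightarrow> 'a \<Rightarrow> 'a set" where
  "limiting_subdiff f x =
     (if f x \<in> {\<infinity>, -\<infinity>} then {}
      else {y. \<exists>xs ys. xs \<longlonglongrightarrow> x \<and> (\<lambda>n. f (xs n)) \<longlonglongrightarrow> f x \<and> ys \<longlonglongrightarrow> y \<and>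
                     (\<forall>n. ys n \<in> frechet_subdiff f (xs n))})"

end

theory Submission
  imports Defs
begin

text \<open>
  Let \<open>y\<close> be a Frechet subgradient of \<open>\<phi>\<close> at \<open>x\<close> and let \<open>Z\<close> be close to \<open>\<Lambda>\<^sub>a x\<close>.
  For \<open>t = |Z - \<Lambda>\<^sub>a x| / (2 e)\<close> choose \<open>s \<in> S\<close> with \<open>\<tau>(x + t y) = s \<cdot> (x + t y)\<close> and put
  \<open>z = s\<inverse> \<cdot> \<gamma>(Z)\<close>. Then \<open>\<phi>(z) = \<phi>(\<gamma>(Z))\<close>, \<open>|z| = |Z|\<close>, and axiom [C] gives
  \<open>\<langle>Z, \<Lambda>\<^sub>a(x + t y)\<rangle> \<le> \<langle>z, x + t y\<rangle>\<close>. Expanding this inequality bounds \<open>|z - x|\<close> by a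
  multiple of \<open>|Z - \<Lambda>\<^sub>a x|\<close> and \<open>\<langle>Z - \<Lambda>\<^sub>a x, \<Lambda>\<^sub>a y\<rangle> - \<langle>z - x, y\<rangle>\<close> by \<open>e |Z - \<Lambda>\<^sub>a x|\<close>,
  so the subgradient inequality of \<open>\<phi>\<close> at \<open>x\<close>, evaluated at \<open>z\<close>, yields the one of
  \<open>\<phi> \<circ> \<gamma>\<close> at \<open>\<Lambda>\<^sub>a x\<close>. The converse holds because \<open>\<phi> \<circ> \<gamma> \<circ> \<Lambda>\<^sub>a = \<phi>\<close> and \<open>\<Lambda>\<^sub>a\<close> is an
  isometry, and (ii) follows from the lifting of Frechet subgradients by passing to limits
  along the continuous map \<open>\<Lambda>\<^sub>a\<close>.
\<close>

lemma frechet_subdiff_iff_eventually: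
  fixes f :: "'a::real_inner \<Rightarrow> ereal"
  assumes fx: "f x = ereal r"
  shows "y \<in> frechet_subdiff f x \<longleftrightarrow>
    (\<forall>e>0. \<forall>\<^sub>F z in at x. ereal (r + inner (z - x) y - e * norm (z - x)) \<le> f z)"
proof -
  define Q where "Q z = (f z - f x - ereal (inner (z - x) y)) / ereal (norm (z - x))" for z
  have Q_ge_iff: "ereal (- e) \<le> Q z \<longleftrightarrow> ereal (r + inner (z - x) y - e * norm (z - x)) \<le> f z"
    if "z \<noteq> x" for z e
  proof -
    have n: "norm (z - x) > 0" using that by simp
    show ?thesis
    proof (cases "f z")
      case (real w)
      then have "Q z = ereal ((w - r - inner (z - x) y) / norm (z - x))"
        using n by (simp add: Q_def fx)
      then show ?thesis using n by (simp add: real pos_le_divide_eq algebra_simps)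
    qed (use n in \<open>simp_all add: Q_def fx divide_ereal_def\<close>)
  qed
  have "y \<in> frechet_subdiff f x \<longleftrightarrow> (\<forall>c<0. \<forall>\<^sub>F z in at x. c < Q z)"
    by (simp add: frechet_subdiff_def fx le_Liminf_iff Q_def)
  also have "\<dots> \<longleftrightarrow> (\<forall>e>0. \<forall>\<^sub>F z in at x. ereal (- e) \<le> Q z)"
  proof (intro iffI allI impI)
    fix e :: real assume H: "\<forall>c<0. \<forall>\<^sub>F z in at x. c < Q z" and "e > 0"
    then have "ereal (- e) < 0" by simp
    then have "\<forall>\<^sub>F z in at x. ereal (- e) < Q z" using H by blast
    then show "\<forall>\<^sub>F z in at x. ereal (- e) \<le> Q z"
      by (rule eventually_mono) (rule less_imp_le)
  next
    fix c :: ereal assume H: "\<forall>e>0. \<forall>\<^sub>F z in at x. ereal (- e) \<le> Q z" and "c < 0"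
    obtain b where b: "c < ereal b" "ereal b < 0" using ereal_dense2[OF \<open>c < 0\<close>] by blast
    then have "\<forall>\<^sub>F z in at x. ereal b \<le> Q z" using H[rule_format, of "- b"] by simp
    then show "\<forall>\<^sub>F z in at x. c < Q z"
      by (rule eventually_mono) (use b(1) less_le_trans in blast)
  qed
  also have "\<dots> \<longleftrightarrow> (\<forall>e>0. \<forall>\<^sub>F z in at x. ereal (r + inner (z - x) y - e * norm (z - x)) \<le> f z)"
  proof -
    have "(\<forall>\<^sub>F z in at x. ereal (- e) \<le> Q z) \<longleftrightarrow>
        (\<forall>\<^sub>F z in at x. ereal (r + inner (z - x) y - e * norm (z - x)) \<le> f z)" for e
      by (rule eventually_subst) (auto simp: eventually_at_filter Q_ge_iff)
    then show ?thesis by simp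
  qed
  finally show ?thesis .
qed

lemma frechet_subdiff_transfer:
  fixes f :: "'a::real_inner \<Rightarrow> ereal" and g :: "'b::real_inner \<Rightarrow> ereal"
  assumes y: "y \<in> frechet_subdiff f x" and gX: "g X = f x"
    and compare: "\<And>e. e > 0 \<Longrightarrow> \<exists>M>0. \<forall>Z. Z \<noteq> X \<longrightarrow> (\<exists>z. f z \<le> g Z \<and>
        norm (z - x) \<le> M * norm (Z - X) \<and> inner (Z - X) Y \<le> inner (z - x) y + e * norm (Z - X))"
  shows "Y \<in> frechet_subdiff g X"
proof -
  obtain r where fx: "f x = ereal r"
    using y by (cases "f x") (auto simp: frechet_subdiff_def)
  have y_ineq: "\<forall>e>0. \<forall>\<^sub>F z in at x. ereal (r + inner (z - x) y - e * norm (z - x)) \<le> f z"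
    using y frechet_subdiff_iff_eventually[of f x r y] fx by blast
  have "\<forall>\<^sub>F Z in at X. ereal (r + inner (Z - X) Y - e * norm (Z - X)) \<le> g Z" if "e > 0" for e
  proof -
    obtain M where "M > 0" and M: "\<And>Z. Z \<noteq> X \<Longrightarrow> \<exists>z. f z \<le> g Z \<and>
        norm (z - x) \<le> M * norm (Z - X) \<and> inner (Z - X) Y \<le> inner (z - x) y + e / 2 * norm (Z - X)"
      using compare[of "e / 2"] \<open>e > 0\<close> by auto
    have "e / (2 * M) > 0" using \<open>e > 0\<close> \<open>M > 0\<close> by simp
    then have "\<forall>\<^sub>F z in at x. ereal (r + inner (z - x) y - e / (2 * M) * norm (z - x)) \<le> f z"
      using y_ineq by blast
    then obtain d where "d > 0" and d: "\<And>z. z \<noteq> x \<Longrightarrow> dist z x < d \<Longrightarrow>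
        ereal (r + inner (z - x) y - e / (2 * M) * norm (z - x)) \<le> f z"
      by (auto simp: eventually_at)
    have "ereal (r + inner (Z - X) Y - e * norm (Z - X)) \<le> g Z"
      if "Z \<noteq> X" and "dist Z X < d / M" for Z
    proof -
      obtain z where fz: "f z \<le> g Z" and near: "norm (z - x) \<le> M * norm (Z - X)"
        and inner_le: "inner (Z - X) Y \<le> inner (z - x) y + e / 2 * norm (Z - X)"
        using M[OF \<open>Z \<noteq> X\<close>] by blast
      have "norm (z - x) < d"
        using near that(2) \<open>M > 0\<close> by (simp add: dist_norm pos_less_divide_eq mult.commute)
      then have "ereal (r + inner (z - x) y - e / (2 * M) * norm (z - x)) \<le> f z"
        using d fx by (cases "z = x") (auto simp: dist_norm)
      moreover have "e / (2 * M) * norm (z - x) \<le> e / 2 * norm (Z - X)"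
        using near \<open>M > 0\<close> \<open>e > 0\<close> by (simp add: field_simps)
      then have "r + inner (Z - X) Y - e * norm (Z - X) \<le> r + inner (z - x) y - e / (2 * M) * norm (z - x)"
        using inner_le by linarith
      ultimately show ?thesis
        using fz by (meson ereal_less_eq(3) order_trans)
    qed
    then show ?thesis
      using \<open>d > 0\<close> \<open>M > 0\<close> by (auto simp: eventually_at intro!: exI[of _ "d / M"])
  qed
  then show ?thesis
    using frechet_subdiff_iff_eventually[of g X r Y] gX fx by simp
qed

lemma limiting_subdiff_transfer:
  assumes L: "bounded_linear L" and comp: "\<And>u. g (L u) = f u"
    and frechet: "\<And>u v. v \<in> frechet_subdiff f u \<Longrightarrow> L v \<in> frechet_subdiff g (L u)"
    and y: "y \<in> limiting_subdiff f x"
  shows "L y \<in> limiting_subdiff g (L x)"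
proof -
  have fin: "f x \<notin> {\<infinity>, -\<infinity>}"
    using y by (auto simp: limiting_subdiff_def split: if_splits)
  then obtain xs ys where "xs \<longlonglongrightarrow> x" "(\<lambda>n. f (xs n)) \<longlonglongrightarrow> f x" "ys \<longlonglongrightarrow> y"
    and "\<forall>n. ys n \<in> frechet_subdiff f (xs n)"
    using y by (auto simp: limiting_subdiff_def)
  then have "(\<lambda>n. L (xs n)) \<longlonglongrightarrow> L x" "(\<lambda>n. g (L (xs n))) \<longlonglongrightarrow> g (L x)"
    "(\<lambda>n. L (ys n)) \<longlonglongrightarrow> L y" "\<forall>n. L (ys n) \<in> frechet_subdiff g (L (xs n))"
    using bounded_linear.tendsto[OF L] comp frechet by auto
  with fin comp show ?thesis
    by (auto simp: limiting_subdiff_def)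
qed

lemma lin_isometry_inner:
  assumes "lin_isometry L" shows "inner (L u) (L v) = inner u v"
proof -
  have "norm (L u + L v) = norm (u + v)"
    using assms by (metis lin_isometry_def linear_add)
  then show ?thesis
    using assms by (simp add: lin_isometry_def dot_norm[of "L u"] dot_norm[of u])
qed

lemma lin_isometry_diff:
  assumes "lin_isometry L" shows "L u - L v = L (u - v)"
  using assms by (simp add: lin_isometry_def linear_diff)

lemma lin_isometry_norm_diff:
  assumes "lin_isometry L" shows "norm (L u - L v) = norm (u - v)"
  using assms lin_isometry_diff[OF assms] by (simp add: lin_isometry_def)

lemma frechet_subdiff_comp_lin_isometry:
  assumes L: "lin_isometry L" and "L y \<in> frechet_subdiff g (L x)"
  shows "y \<in> frechet_subdiff (g \<circ> L) x"
proof (rule frechet_subdiff_transfer[OF assms(2)])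
  fix e :: real
  assume "e > 0"
  have "inner (Z - x) y = inner (L Z - L x) (L y)" for Z
    using L by (simp add: lin_isometry_diff lin_isometry_inner)
  moreover have "norm (L Z - L x) = norm (Z - x)" for Z
    using L by (rule lin_isometry_norm_diff)
  ultimately have "g (L Z) \<le> (g \<circ> L) Z \<and> norm (L Z - L x) \<le> 1 * norm (Z - x)
      \<and> inner (Z - x) y \<le> inner (L Z - L x) (L y) + e * norm (Z - x)" for Z
    using \<open>e > 0\<close> by simp
  then show "\<exists>M>0. \<forall>Z. Z \<noteq> x \<longrightarrow> (\<exists>z. g z \<le> (g \<circ> L) Z \<and> norm (z - L x) \<le> M * norm (Z - x)
      \<and> inner (Z - x) y \<le> inner (z - L x) (L y) + e * norm (Z - x))"
    using zero_less_one by blast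
qed simp

lemma lin_isometry_comparison_estimates:
  fixes L :: "'a::real_inner \<Rightarrow> 'b::real_inner"
  assumes L: "lin_isometry L" and norm_z: "norm z = norm Z" and "t > 0"
    and le: "inner Z (L (x + t *\<^sub>R y)) \<le> inner z (x + t *\<^sub>R y)"
  shows "inner (Z - L x) (L y) \<le> inner (z - x) y + (norm (Z - L x))\<^sup>2 / (2 * t)"
    and "norm (z - x) \<le> norm (Z - L x) + 2 * t * norm y"
proof -
  define u where "u = x + t *\<^sub>R y"
  have Lu: "L u = L x + t *\<^sub>R L y"
    using L by (simp add: u_def lin_isometry_def linear_add linear_scale)
  have norm_L: "norm (L v) = norm v" for v
    using L by (simp add: lin_isometry_def)
  have "t * inner (Z - L x) (L y) = inner Z (L u) - inner Z (L x) - t * inner x y"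
    using Lu lin_isometry_inner[OF L] by (simp add: inner_diff_left inner_add_right right_diff_distrib)
  also have "\<dots> \<le> inner z u - inner Z (L x) - t * inner x y"
    using le by (simp add: u_def)
  also have "\<dots> = t * inner (z - x) y + (inner z x - inner Z (L x))"
    by (simp add: u_def algebra_simps)
  also have "\<dots> = t * inner (z - x) y + ((norm (Z - L x))\<^sup>2 - (norm (z - x))\<^sup>2) / 2"
    unfolding dot_norm_neg[of z x] dot_norm_neg[of Z "L x"] norm_z norm_L by (simp add: field_simps)
  also have "\<dots> \<le> t * (inner (z - x) y + (norm (Z - L x))\<^sup>2 / (2 * t))"
    using \<open>t > 0\<close> by (simp add: field_simps)
  finally show "inner (Z - L x) (L y) \<le> inner (z - x) y + (norm (Z - L x))\<^sup>2 / (2 * t)"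
    using \<open>t > 0\<close> by simp
  have "inner Z (L u) \<le> inner z u"
    using le by (simp add: u_def)
  then have "(norm (z - u))\<^sup>2 \<le> (norm (Z - L u))\<^sup>2"
    unfolding dot_norm_neg[of z u] dot_norm_neg[of Z "L u"] norm_z norm_L by simp
  then have "norm (z - u) \<le> norm (Z - L u)"
    by (rule power2_le_imp_le) simp
  also have "\<dots> \<le> norm (Z - L x) + t * norm y"
    using norm_triangle_ineq4[of "Z - L x" "t *\<^sub>R L y"] \<open>t > 0\<close> norm_L by (simp add: Lu algebra_simps)
  finally have "norm (z - u) \<le> norm (Z - L x) + t * norm y" .
  moreover have "norm (z - x) \<le> norm (z - u) + t * norm y"
    using norm_triangle_ineq[of "z - u" "t *\<^sub>R y"] \<open>t > 0\<close> by (simp add: u_def)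
  ultimately show "norm (z - x) \<le> norm (Z - L x) + 2 * t * norm y"
    by linarith
qed

lemma isometric_group_action_inv_cancel:
  assumes "isometric_group_action G act" and "s \<in> carrier G"
  shows "act s (act (inv\<^bsub>G\<^esub> s) u) = u"
proof -
  have "act s (act (inv\<^bsub>G\<^esub> s) u) = act (s \<otimes>\<^bsub>G\<^esub> inv\<^bsub>G\<^esub> s) u"
    using assms by (simp add: isometric_group_action_def)
  also have "\<dots> = u"
    using assms by (simp add: isometric_group_action_def group.r_inv)
  finally show ?thesis .
qed

lemma isometric_group_action_orbit_norm:
  assumes "isometric_group_action G act" and "v \<in> orbit_of G act u"
  shows "norm v = norm u"
  using assms by (auto simp: isometric_group_action_def orbit_of_def lin_isometry_def)

lemma S_invariant_orbit:
  assumes "S_invariant G act f" and "v \<in> orbit_of G act u"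
  shows "f v = f u"
  using assms by (auto simp: S_invariant_def orbit_of_def)

lemma spectral_decomposition_system_norm:
  assumes "spectral_decomposition_system G act \<gamma> A \<Lambda>"
  shows "norm (\<gamma> U) = norm U"
proof -
  obtain b where "b \<in> A" "U = \<Lambda> b (\<gamma> U)"
    using assms unfolding spectral_decomposition_system_def by blast
  then show ?thesis
    using assms by (metis spectral_decomposition_system_def lin_isometry_def)
qed

lemma spectral_decomposition_system_orbit:
  assumes "spectral_decomposition_system G act \<gamma> A \<Lambda>" and "a \<in> A"
  shows "\<gamma> (\<Lambda> a u) \<in> orbit_of G act u"
  using assms by (auto simp: spectral_decomposition_system_def)

lemma spectral_decomposition_system_comparison:
  assumes sds: "spectral_decomposition_system G act \<gamma> A \<Lambda>" and "a \<in> A"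
  obtains z where "z \<in> orbit_of G act (\<gamma> Z)" and "inner Z (\<Lambda> a u) \<le> inner z u"
proof -
  have act: "isometric_group_action G act"
    and C: "\<And>X Y. inner X Y \<le> inner (\<gamma> X) (\<gamma> Y)"
    using sds by (auto simp: spectral_decomposition_system_def)
  obtain s where s: "s \<in> carrier G" "\<gamma> (\<Lambda> a u) = act s u"
    using spectral_decomposition_system_orbit[OF sds \<open>a \<in> A\<close>] by (auto simp: orbit_of_def)
  define z where "z = act (inv\<^bsub>G\<^esub> s) (\<gamma> Z)"
  have "inv\<^bsub>G\<^esub> s \<in> carrier G"
    using act s(1) by (simp add: isometric_group_action_def)
  then have "z \<in> orbit_of G act (\<gamma> Z)"
    by (auto simp: orbit_of_def z_def)
  moreover have "inner Z (\<Lambda> a u) \<le> inner z u"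
  proof -
    have "inner Z (\<Lambda> a u) \<le> inner (\<gamma> Z) (\<gamma> (\<Lambda> a u))"
      by (rule C)
    also have "\<dots> = inner (act s z) (act s u)"
      using s isometric_group_action_inv_cancel[OF act s(1)] by (simp add: z_def)
    also have "\<dots> = inner z u"
      using act s(1) by (simp add: isometric_group_action_def lin_isometry_inner)
    finally show ?thesis .
  qed
  ultimately show ?thesis
    by (rule that)
qed

lemma frechet_subdiff_spectral_lift:
  assumes sds: "spectral_decomposition_system G act \<gamma> A \<Lambda>"
    and inv: "S_invariant G act \<phi>" and "a \<in> A" and y: "y \<in> frechet_subdiff \<phi> x"
  shows "\<Lambda> a y \<in> frechet_subdiff (\<phi> \<circ> \<gamma>) (\<Lambda> a x)"
proof (rule frechet_subdiff_transfer[OF y])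
  have L: "lin_isometry (\<Lambda> a)"
    using sds \<open>a \<in> A\<close> by (simp add: spectral_decomposition_system_def)
  have act: "isometric_group_action G act"
    using sds by (simp add: spectral_decomposition_system_def)
  show "(\<phi> \<circ> \<gamma>) (\<Lambda> a x) = \<phi> x"
    using S_invariant_orbit[OF inv spectral_decomposition_system_orbit[OF sds \<open>a \<in> A\<close>]] by simp
  fix e :: real assume "e > 0"
  define M where "M = 1 + norm y / e"
  have "M > 0"
    using \<open>e > 0\<close> by (simp add: M_def add_pos_nonneg)
  have "\<exists>z. \<phi> z \<le> (\<phi> \<circ> \<gamma>) Z \<and> norm (z - x) \<le> M * norm (Z - \<Lambda> a x)
      \<and> inner (Z - \<Lambda> a x) (\<Lambda> a y) \<le> inner (z - x) y + e * norm (Z - \<Lambda> a x)"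
    if "Z \<noteq> \<Lambda> a x" for Z
  proof -
    define n where "n = norm (Z - \<Lambda> a x)"
    define t where "t = n / (2 * e)"
    have "n > 0" "t > 0"
      using that \<open>e > 0\<close> by (simp_all add: n_def t_def)
    obtain z where orbit: "z \<in> orbit_of G act (\<gamma> Z)"
      and le: "inner Z (\<Lambda> a (x + t *\<^sub>R y)) \<le> inner z (x + t *\<^sub>R y)"
      using spectral_decomposition_system_comparison[OF sds \<open>a \<in> A\<close>] by blast
    have "norm z = norm Z"
      using isometric_group_action_orbit_norm[OF act orbit] spectral_decomposition_system_norm[OF sds]
      by simp
    note estimates = lin_isometry_comparison_estimates[OF L this \<open>t > 0\<close> le]
    have "norm (z - x) \<le> M * n"
      using estimates(2) \<open>e > 0\<close> by (simp add: M_def t_def n_def field_simps)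
    moreover have "inner (Z - \<Lambda> a x) (\<Lambda> a y) \<le> inner (z - x) y + e * n"
      using estimates(1) \<open>e > 0\<close> \<open>n > 0\<close> by (simp add: t_def n_def power2_eq_square field_simps)
    moreover have "\<phi> z = (\<phi> \<circ> \<gamma>) Z"
      using S_invariant_orbit[OF inv orbit] by simp
    ultimately show ?thesis
      unfolding n_def by (intro exI[of _ z]) simp
  qed
  then show "\<exists>M>0. \<forall>Z. Z \<noteq> \<Lambda> a x \<longrightarrow> (\<exists>z. \<phi> z \<le> (\<phi> \<circ> \<gamma>) Z
      \<and> norm (z - x) \<le> M * norm (Z - \<Lambda> a x)
      \<and> inner (Z - \<Lambda> a x) (\<Lambda> a y) \<le> inner (z - x) y + e * norm (Z - \<Lambda> a x))"
    using \<open>M > 0\<close> by blast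
qed

theorem proposition4p6:
  fixes G :: "'g monoid" and act :: "'g \<Rightarrow> 'x::euclidean_space \<Rightarrow> 'x"
    and \<gamma> :: "'h::euclidean_space \<Rightarrow> 'x" and A :: "'a set" and \<Lambda> :: "'a \<Rightarrow> 'x \<Rightarrow> 'h"
    and \<phi> :: "'x \<Rightarrow> ereal" and x y :: 'x and a :: 'a
  assumes "spectral_decomposition_system G act \<gamma> A \<Lambda>"
    and "closed {Blinfun (\<Lambda> b) | b. b \<in> A}"
    and "S_invariant G act \<phi>"
    and "a \<in> A"
  shows "(y \<in> frechet_subdiff \<phi> x \<longleftrightarrow> \<Lambda> a y \<in> frechet_subdiff (\<phi> \<circ> \<gamma>) (\<Lambda> a x))
    \<and> (y \<in> limiting_subdiff \<phi> x \<longrightarrow> \<Lambda> a y \<in> limiting_subdiff (\<phi> \<circ> \<gamma>) (\<Lambda> a x))"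
proof -
  note sds = assms(1) and inv = assms(3) and a = assms(4)
  have L: "lin_isometry (\<Lambda> a)"
    using sds a by (simp add: spectral_decomposition_system_def)
  have comp: "(\<phi> \<circ> \<gamma>) (\<Lambda> a u) = \<phi> u" for u
    using S_invariant_orbit[OF inv spectral_decomposition_system_orbit[OF sds a]] by simp
  note lift = frechet_subdiff_spectral_lift[OF sds inv a]
  have "(\<phi> \<circ> \<gamma>) \<circ> \<Lambda> a = \<phi>"
    using comp by (simp add: fun_eq_iff)
  then have descend: "\<Lambda> a y \<in> frechet_subdiff (\<phi> \<circ> \<gamma>) (\<Lambda> a x) \<Longrightarrow> y \<in> frechet_subdiff \<phi> x"
    using frechet_subdiff_comp_lin_isometry[OF L] by metis
  have "bounded_linear (\<Lambda> a)"
    using L by (simp add: lin_isometry_def linear_conv_bounded_linear)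
  note limiting_subdiff_transfer[OF this comp lift]
  then show ?thesis
    using lift descend by blast
qed

end
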